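(* Let $KL^2$ be a Klein bottle with a flat metric, let $\gamma$ be a closed geodesic on $KL^2$ with a self-intersection point $P$, and let $I\subsetneq\gamma$ be a proper sub-arc of $\gamma$ that starts and ends at $P$, so that $I$ is a closed loop. Then going once around $I$ changes local orientation. *)

theory Defs
  imports "HOL-Analysis.Product_Vector"
begin

text \<open>Flat Klein bottle KL^2 = R^2 / Gamma(a,b), where Gamma(a,b) is generated by the
  glide reflection g(x,y) = (x + a, -y) and the translation t(x,y) = (x, y + b), a, b > 0.
  Every element of Gamma is g^k o t^m for integers k, m.\<close>

definition kb_elem :: "real \<Rightarrow> real \<Rightarrow> int \<Rightarrow> int \<Rightarrow> real \<times> real \<Rightarrow> real \<times> real" where
  "kb_elem a b k m = (\<lambda>(x, y). (x + of_int k * a, (if even k then 1 else -1) * (y + of_int m * b)))"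

definition kb_rel :: "real \<Rightarrow> real \<Rightarrow> real \<times> real \<Rightarrow> real \<times> real \<Rightarrow> bool" where
  "kb_rel a b p q \<longleftrightarrow> (\<exists>k m. q = kb_elem a b k m p)"

text \<open>An affine map of the plane reverses orientation iff its linear part has negative determinant.\<close>
definition orientation_reversing :: "(real \<times> real \<Rightarrow> real \<times> real) \<Rightarrow> bool" where
  "orientation_reversing h \<longleftrightarrow>
     (let u = h (1, 0) - h (0, 0); w = h (0, 1) - h (0, 0)
      in fst u * snd w - snd u * fst w < 0)"

definition line :: "real \<times> real \<Rightarrow> real \<times> real \<Rightarrow> real \<Rightarrow> real \<times> real" where
  "line p v t = p + t *\<^sub>R v"

definition kb_closed_geodesic :: "real \<Rightarrow> real \<Rightarrow> real \<times> real \<Rightarrow> real \<times> real \<Rightarrow> real \<Rightarrow> bool" where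
  "kb_closed_geodesic a b p v T \<longleftrightarrow>
     v \<noteq> 0 \<and> T > 0 \<and>
     (\<forall>t. kb_rel a b (line p v t) (line p v (t + T))) \<and>
     (\<forall>s. 0 < s \<and> s < T \<longrightarrow> \<not> (\<forall>t. kb_rel a b (line p v t) (line p v (t + s))))"

end

theory Submission
  imports Defs
begin

text \<open>The orientation-preserving elements of \<open>\<Gamma>(a,b)\<close> are exactly the translations \<open>g\<^sup>k t\<^sup>m\<close>
  with \<open>k\<close> even. A translation that moves the point at time \<open>t\<^sub>1\<close> of a straight line to the
  point at time \<open>t\<^sub>2\<close> moves every point of that line forward by \<open>t\<^sub>2 - t\<^sub>1\<close>, so \<open>t\<^sub>2 - t\<^sub>1\<close> would
  be a period of the geodesic in \<open>(0, T)\<close>, contradicting minimality of \<open>T\<close>.\<close>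

lemma kb_elem_even:
  "even k \<Longrightarrow> kb_elem a b k m q = q + (of_int k * a, of_int m * b)"
  by (cases q) (simp add: kb_elem_def)

lemma orientation_reversing_kb_elem_iff:
  "orientation_reversing (kb_elem a b k m) \<longleftrightarrow> odd k"
  by (simp add: orientation_reversing_def kb_elem_def Let_def)

lemma line_add: "line p v (t + d) = line p v t + d *\<^sub>R v"
  by (simp add: line_def scaleR_add_left algebra_simps)

lemma line_translation_shift:
  assumes "line p v t2 = line p v t1 + w"
  shows "line p v (t + (t2 - t1)) = line p v t + w"
proof -
  have "(t2 - t1) *\<^sub>R v = w"
    using assms line_add[of p v t1 "t2 - t1"] by simp
  then show ?thesis
    by (simp add: line_add)
qed

lemma kb_closed_geodesic_no_shorter_period:
  assumes "kb_closed_geodesic a b p v T" and "0 < s" and "s < T"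
  shows "\<not> (\<forall>t. kb_rel a b (line p v t) (line p v (t + s)))"
  using assms unfolding kb_closed_geodesic_def by blast

theorem proposition3:
  fixes a b T t1 t2 :: real and p v :: "real \<times> real"
  assumes "a > 0" and "b > 0"
    and "kb_closed_geodesic a b p v T"
    and "t1 < t2" and "t2 < t1 + T"
    and "kb_rel a b (line p v t1) (line p v t2)"
  shows "\<forall>k m. line p v t2 = kb_elem a b k m (line p v t1)
           \<longrightarrow> orientation_reversing (kb_elem a b k m)"
proof (intro allI impI)
  fix k m
  assume closes_loop: "line p v t2 = kb_elem a b k m (line p v t1)"
  show "orientation_reversing (kb_elem a b k m)"
  proof (rule ccontr)
    assume "\<not> orientation_reversing (kb_elem a b k m)"
    then have translation: "kb_elem a b k m q = q + (of_int k * a, of_int m * b)" for q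
      by (simp add: orientation_reversing_kb_elem_iff kb_elem_even)
    have "line p v (t + (t2 - t1)) = kb_elem a b k m (line p v t)" for t
      using line_translation_shift[of p v t2 t1 _ t] closes_loop unfolding translation by simp
    then have "kb_rel a b (line p v t) (line p v (t + (t2 - t1)))" for t
      unfolding kb_rel_def by blast
    moreover have "0 < t2 - t1" "t2 - t1 < T"
      using assms(4,5) by auto
    ultimately show False
      using kb_closed_geodesic_no_shorter_period[OF assms(3)] by blast
  qed
qed

end
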